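(* Let $T$ be a complete theory with monster model $\mathcal{U}$, $A\subseteq\mathcal{U}$ small, and $\nu\in\mathfrak{M}_y(\mathcal{U})$ smooth over $A$. Then for every $\mu\in\mathfrak{M}_x(\mathcal{U})$, $\mu\geq_{\mathbb{E},A}\nu$.
   Context: For $C\subseteq\mathcal{U}$, $\mathcal{L}_x(C)$ is the Boolean algebra of formulas in $x$ with parameters from $C$ modulo $T$, embedded in $\mathcal{L}_{xy}(C)$ via $\varphi(x)\mapsto\varphi(x)\wedge y=y$; $\mathfrak{M}_x(C)$ is the set of finitely additive probability measures on $\mathcal{L}_x(C)$. For $\omega\in\mathfrak{M}_{xy}(C)$, $\pi_x(\omega)(\varphi(x))=\omega(\varphi(x)\wedge y=y)$ (similarly $\pi_y$); $\omega|_D$ is restriction. $\mu\geq_{\mathbb{E},A}\nu$ means there is $\lambda\in\mathfrak{M}_{xy}(A)$ with $\pi_x(\lambda)=\mu|_A$ such that every $\omega\in\mathfrak{M}_{xy}(\mathcal{U})$ with $\omega|_A=\lambda$ and $\pi_x(\omega)=\mu$ satisfies $\pi_y(\omega)=\nu$. A global measure $\nu$ is smooth over $A$ if every $\nu'\in\mathfrak{M}_y(\mathcal{U})$ with $\nu'|_A=\nu|_A$ equals $\nu$. *)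

theory Defs
  imports Complex_Main "HOL-Library.Equipollence"
begin

datatype 'f trm = Var nat | Fn 'f "'f trm list"

datatype ('f, 'r) fm =
    FBot
  | FEq "'f trm" "'f trm"
  | FRel 'r "'f trm list"
  | FNeg "('f, 'r) fm"
  | FConj "('f, 'r) fm" "('f, 'r) fm"
  | FEx nat "('f, 'r) fm"

fun vars_trm :: "'f trm \<Rightarrow> nat set" where
  "vars_trm (Var i) = {i}"
| "vars_trm (Fn f ts) = (\<Union>t\<in>set ts. vars_trm t)"

fun FV :: "('f, 'r) fm \<Rightarrow> nat set" where
  "FV FBot = {}"
| "FV (FEq s t) = vars_trm s \<union> vars_trm t"
| "FV (FRel r ts) = (\<Union>t\<in>set ts. vars_trm t)"
| "FV (FNeg p) = FV p"
| "FV (FConj p q) = FV p \<union> FV q"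
| "FV (FEx i p) = FV p - {i}"

record ('a, 'f, 'r) struct =
  dom :: "'a set"
  fint :: "'f \<Rightarrow> 'a list \<Rightarrow> 'a"
  rint :: "'r \<Rightarrow> 'a list \<Rightarrow> bool"

fun eval :: "('a, 'f, 'r) struct \<Rightarrow> (nat \<Rightarrow> 'a) \<Rightarrow> 'f trm \<Rightarrow> 'a" where
  "eval S e (Var i) = e i"
| "eval S e (Fn f ts) = fint S f (map (eval S e) ts)"

fun sat :: "('a, 'f, 'r) struct \<Rightarrow> (nat \<Rightarrow> 'a) \<Rightarrow> ('f, 'r) fm \<Rightarrow> bool" where
  "sat S e FBot = False"
| "sat S e (FEq s t) = (eval S e s = eval S e t)"
| "sat S e (FRel r ts) = rint S r (map (eval S e) ts)"
| "sat S e (FNeg p) = (\<not> sat S e p)"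
| "sat S e (FConj p q) = (sat S e p \<and> sat S e q)"
| "sat S e (FEx i p) = (\<exists>a\<in>dom S. sat S (e(i := a)) p)"

definition is_structure :: "('a, 'f, 'r) struct \<Rightarrow> bool" where
  "is_structure S \<longleftrightarrow> dom S \<noteq> {} \<and>
     (\<forall>f as. set as \<subseteq> dom S \<longrightarrow> fint S f as \<in> dom S)"

definition params_in :: "('a, 'f, 'r) struct \<Rightarrow> 'a set \<Rightarrow> nat set \<Rightarrow> ('f, 'r) fm \<Rightarrow> (nat \<Rightarrow> 'a) \<Rightarrow> bool" where
  "params_in S B X p e \<longleftrightarrow> (\<forall>i\<in>FV p - X. e i \<in> B)"

text \<open>K is a set whose cardinality plays the role of the cardinal kappa.\<close>
definition saturated :: "('a, 'f, 'r) struct \<Rightarrow> 'k set \<Rightarrow> bool" where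
  "saturated S K \<longleftrightarrow>
    (\<forall>B (\<Sigma> :: (('f, 'r) fm \<times> (nat \<Rightarrow> 'a)) set).
       B \<subseteq> dom S \<and> B \<prec> K \<and> (\<forall>(p, e)\<in>\<Sigma>. params_in S B {0} p e) \<and>
       (\<forall>F. finite F \<and> F \<subseteq> \<Sigma> \<longrightarrow> (\<exists>a\<in>dom S. \<forall>(p, e)\<in>F. sat S (e(0 := a)) p))
       \<longrightarrow> (\<exists>a\<in>dom S. \<forall>(p, e)\<in>\<Sigma>. sat S (e(0 := a)) p))"

definition automorphism :: "('a, 'f, 'r) struct \<Rightarrow> ('a \<Rightarrow> 'a) \<Rightarrow> bool" where
  "automorphism S \<sigma> \<longleftrightarrow> bij_betw \<sigma> (dom S) (dom S) \<and>
     (\<forall>f as. set as \<subseteq> dom S \<longrightarrow> \<sigma> (fint S f as) = fint S f (map \<sigma> as)) \<and>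
     (\<forall>r as. set as \<subseteq> dom S \<longrightarrow> (rint S r (map \<sigma> as) \<longleftrightarrow> rint S r as))"

definition elementary_on :: "('a, 'f, 'r) struct \<Rightarrow> 'a set \<Rightarrow> ('a \<Rightarrow> 'a) \<Rightarrow> bool" where
  "elementary_on S B g \<longleftrightarrow> g ` B \<subseteq> dom S \<and>
     (\<forall>(p :: ('f, 'r) fm) e. params_in S B {} p e \<longrightarrow> (sat S e p \<longleftrightarrow> sat S (g \<circ> e) p))"

definition strongly_homogeneous :: "('a, 'f, 'r) struct \<Rightarrow> 'k set \<Rightarrow> bool" where
  "strongly_homogeneous S K \<longleftrightarrow>
    (\<forall>B g. B \<subseteq> dom S \<and> B \<prec> K \<and> elementary_on S B g \<longrightarrow>
       (\<exists>\<sigma>. automorphism S \<sigma> \<and> (\<forall>b\<in>B. \<sigma> b = g b)))"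

definition monster :: "('a, 'f, 'r) struct \<Rightarrow> 'k set \<Rightarrow> bool" where
  "monster S K \<longleftrightarrow> is_structure S \<and> infinite K \<and> (UNIV :: ('f + 'r) set) \<prec> K \<and>
     saturated S K \<and> strongly_homogeneous S K"

definition tuples :: "('a, 'f, 'r) struct \<Rightarrow> nat \<Rightarrow> 'a list set" where
  "tuples S n = {as. length as = n \<and> set as \<subseteq> dom S}"

definition defset :: "('a, 'f, 'r) struct \<Rightarrow> nat \<Rightarrow> ('f, 'r) fm \<Rightarrow> (nat \<Rightarrow> 'a) \<Rightarrow> 'a list set" where
  "defset S n p e = {as \<in> tuples S n. sat S (\<lambda>i. if i < n then as ! i else e i) p}"

text \<open>Elements of L_x(C), x an n-tuple of variables: C-definable subsets of U^n.\<close>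
definition definable :: "('a, 'f, 'r) struct \<Rightarrow> 'a set \<Rightarrow> nat \<Rightarrow> 'a list set \<Rightarrow> bool" where
  "definable S C n D \<longleftrightarrow>
     (\<exists>(p :: ('f, 'r) fm) e. params_in S C {..<n} p e \<and> D = defset S n p e)"

text \<open>Keisler measures in M_x(C), normalised to 0 outside L_x(C).\<close>
definition keisler :: "('a, 'f, 'r) struct \<Rightarrow> 'a set \<Rightarrow> nat \<Rightarrow> ('a list set \<Rightarrow> real) \<Rightarrow> bool" where
  "keisler S C n \<mu> \<longleftrightarrow>
     (\<forall>D. \<not> definable S C n D \<longrightarrow> \<mu> D = 0) \<and>
     (\<forall>D. definable S C n D \<longrightarrow> 0 \<le> \<mu> D) \<and>
     \<mu> (tuples S n) = 1 \<and>
     (\<forall>D E. definable S C n D \<and> definable S C n E \<and> D \<inter> E = {} \<longrightarrow> \<mu> (D \<union> E) = \<mu> D + \<mu> E)"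

definition restr :: "('a, 'f, 'r) struct \<Rightarrow> 'a set \<Rightarrow> nat \<Rightarrow> ('a list set \<Rightarrow> real) \<Rightarrow> 'a list set \<Rightarrow> real" where
  "restr S C n \<mu> D = (if definable S C n D then \<mu> D else 0)"

definition lprod :: "'a list set \<Rightarrow> 'a list set \<Rightarrow> 'a list set" where
  "lprod D E = {as @ bs | as bs. as \<in> D \<and> bs \<in> E}"

text \<open>pi_x (x an n-tuple, y an m-tuple): phi(x) is identified with phi(x) and y=y.\<close>
definition proj_x :: "('a, 'f, 'r) struct \<Rightarrow> 'a set \<Rightarrow> nat \<Rightarrow> nat \<Rightarrow> ('a list set \<Rightarrow> real) \<Rightarrow> 'a list set \<Rightarrow> real" where
  "proj_x S C n m \<omega> D = (if definable S C n D then \<omega> (lprod D (tuples S m)) else 0)"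

definition proj_y :: "('a, 'f, 'r) struct \<Rightarrow> 'a set \<Rightarrow> nat \<Rightarrow> nat \<Rightarrow> ('a list set \<Rightarrow> real) \<Rightarrow> 'a list set \<Rightarrow> real" where
  "proj_y S C n m \<omega> E = (if definable S C m E then \<omega> (lprod (tuples S n) E) else 0)"

definition geqE :: "('a, 'f, 'r) struct \<Rightarrow> 'a set \<Rightarrow> nat \<Rightarrow> nat \<Rightarrow> ('a list set \<Rightarrow> real) \<Rightarrow> ('a list set \<Rightarrow> real) \<Rightarrow> bool" where
  "geqE S A n m \<mu> \<nu> \<longleftrightarrow>
     (\<exists>lam. keisler S A (n + m) lam \<and> proj_x S A n m lam = restr S A n \<mu> \<and>
        (\<forall>\<omega>. keisler S (dom S) (n + m) \<omega> \<and> restr S A (n + m) \<omega> = lam \<and>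
              proj_x S (dom S) n m \<omega> = \<mu> \<longrightarrow> proj_y S (dom S) n m \<omega> = \<nu>))"

definition smooth :: "('a, 'f, 'r) struct \<Rightarrow> 'a set \<Rightarrow> nat \<Rightarrow> ('a list set \<Rightarrow> real) \<Rightarrow> bool" where
  "smooth S A m \<nu> \<longleftrightarrow>
     (\<forall>\<nu>'. keisler S (dom S) m \<nu>' \<and> restr S A m \<nu>' = restr S A m \<nu> \<longrightarrow> \<nu>' = \<nu>)"

end

theory Submission
  imports Defs "HOL-Analysis.Analysis"
begin

text \<open>Any global \<open>\<omega>\<close> extending a coupling \<open>\<lambda>\<close> of \<open>\<mu>|A\<close> and \<open>\<nu>|A\<close> has a \<open>y\<close>-marginal
  that agrees with \<open>\<nu>\<close> over \<open>A\<close>, so it is \<open>\<nu>\<close> by smoothness; thus only the existence of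
  such a coupling is needed. On finitely many definable sets, the finitely additive \<open>\<nu>\<close>
  agrees with a finite convex combination \<open>\<Sum>\<^sub>b w\<^sub>b \<delta>\<^sub>b\<close> of point masses, and then
  \<open>C \<mapsto> \<Sum>\<^sub>b w\<^sub>b \<mu>(C\<^sub>b)\<close>, with \<open>C\<^sub>b\<close> the fibre of \<open>C\<close> over \<open>b\<close>, couples \<open>\<mu>|A\<close> with \<open>\<nu>\<close> on
  these sets. Compactness of \<open>[0,1]\<^bsup>L\<^sub>x\<^sub>y(A)\<^esup>\<close> yields a coupling on all of \<open>L\<^sub>y(A)\<close>.\<close>

fun rename_trm :: "(nat \<Rightarrow> nat) \<Rightarrow> 'f trm \<Rightarrow> 'f trm" where
  "rename_trm f (Var i) = Var (f i)"
| "rename_trm f (Fn g ts) = Fn g (map (rename_trm f) ts)"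

fun rename :: "(nat \<Rightarrow> nat) \<Rightarrow> ('f, 'r) fm \<Rightarrow> ('f, 'r) fm" where
  "rename f FBot = FBot"
| "rename f (FEq s t) = FEq (rename_trm f s) (rename_trm f t)"
| "rename f (FRel r ts) = FRel r (map (rename_trm f) ts)"
| "rename f (FNeg p) = FNeg (rename f p)"
| "rename f (FConj p q) = FConj (rename f p) (rename f q)"
| "rename f (FEx i p) = FEx (f i) (rename f p)"

lemma eval_rename_trm: "eval S e (rename_trm f t) = eval S (e \<circ> f) t"
  by (induction t) (simp_all add: comp_def cong: map_cong)

lemma vars_rename_trm: "vars_trm (rename_trm f t) = f ` vars_trm t"
  by (induction t) auto

lemma sat_rename: "inj f \<Longrightarrow> sat S e (rename f p) = sat S (e \<circ> f) p"
proof (induction p arbitrary: e)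
  case (FEx i p)
  have "(e(f i := a)) \<circ> f = (e \<circ> f)(i := a)" for a
    using FEx.prems by (auto simp: fun_eq_iff inj_eq)
  then show ?case by (simp only: rename.simps sat.simps FEx.IH[OF FEx.prems])
qed (auto simp: eval_rename_trm comp_def)

lemma FV_rename: "inj f \<Longrightarrow> FV (rename f p) = f ` FV p"
  by (induction p) (auto simp: vars_rename_trm inj_eq)

definition tuple_env :: "nat \<Rightarrow> 'a list \<Rightarrow> (nat \<Rightarrow> 'a) \<Rightarrow> nat \<Rightarrow> 'a" where
  "tuple_env n as e = (\<lambda>i. if i < n then as ! i else e i)"

lemma defset_tuple_env: "defset S n p e = {as \<in> tuples S n. sat S (tuple_env n as e) p}"
  by (simp add: defset_def tuple_env_def)

lemma definable_mono: "C \<subseteq> C' \<Longrightarrow> definable S C n D \<Longrightarrow> definable S C' n D"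
  unfolding definable_def params_in_def by blast

lemma definable_subset_tuples: "definable S C n D \<Longrightarrow> D \<subseteq> tuples S n"
  unfolding definable_def defset_def by auto

lemma definable_empty: "definable S C n {}"
  unfolding definable_def params_in_def defset_def by (rule exI[of _ FBot]) auto

lemma definable_tuples: "definable S C n (tuples S n)"
  unfolding definable_def params_in_def defset_def by (rule exI[of _ "FNeg FBot"]) auto

lemma definable_compl: "definable S C n D \<Longrightarrow> definable S C n (tuples S n - D)"
  unfolding definable_def params_in_def defset_def
  by (elim exE conjE, intro exI[of _ "FNeg _"] exI) auto

lemma definable_Int:
  assumes "definable S C n D1" "definable S C n D2"
  shows "definable S C n (D1 \<inter> D2)"
proof -
  obtain p1 e1 where p1: "params_in S C {..<n} p1 e1" "D1 = defset S n p1 e1"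
    using assms(1) unfolding definable_def by blast
  obtain p2 e2 where p2: "params_in S C {..<n} p2 e2" "D2 = defset S n p2 e2"
    using assms(2) unfolding definable_def by blast
  \<comment> \<open>The parameter variables of \<open>p1\<close> and \<open>p2\<close> are moved apart, to the even and odd numbers.\<close>
  define f1 where "f1 = (\<lambda>i::nat. if i < n then i else 2 * i)"
  define f2 where "f2 = (\<lambda>i::nat. if i < n then i else 2 * i + 1)"
  define e where "e = (\<lambda>j. if even j then e1 (j div 2) else e2 (j div 2))"
  have inj: "inj f1" "inj f2" unfolding f1_def f2_def inj_def by auto
  have env: "tuple_env n as e \<circ> f1 = tuple_env n as e1" "tuple_env n as e \<circ> f2 = tuple_env n as e2" for as
    by (auto simp: fun_eq_iff tuple_env_def f1_def f2_def e_def)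
  have "params_in S C {..<n} (FConj (rename f1 p1) (rename f2 p2)) e"
    using p1(1) p2(1) unfolding params_in_def FV.simps FV_rename[OF inj(1)] FV_rename[OF inj(2)]
    by (auto simp: f1_def f2_def e_def split: if_splits)
  moreover have "D1 \<inter> D2 = defset S n (FConj (rename f1 p1) (rename f2 p2)) e"
    using p1(2) p2(2) by (auto simp: defset_tuple_env sat_rename[OF inj(1)] sat_rename[OF inj(2)] env)
  ultimately show ?thesis unfolding definable_def by blast
qed

lemma definable_Un:
  assumes "definable S C n D1" "definable S C n D2"
  shows "definable S C n (D1 \<union> D2)"
proof -
  have "D1 \<union> D2 = tuples S n - ((tuples S n - D1) \<inter> (tuples S n - D2))"
    using definable_subset_tuples[OF assms(1)] definable_subset_tuples[OF assms(2)] by blast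
  then show ?thesis using assms by (simp add: definable_compl definable_Int)
qed

lemma algebra_definable: "algebra (tuples S n) {D. definable S C n D}"
  unfolding algebra_iff_Un
  by (auto dest: definable_subset_tuples intro: definable_empty definable_compl definable_Un)

lemma definable_coordinate_preimage:
  assumes "definable S C k D" and "inj f"
    and "\<And>i. i < k \<Longrightarrow> f i < k'" and "\<And>i. k \<le> i \<Longrightarrow> k' \<le> f i"
  shows "definable S C k' {cs \<in> tuples S k'. map (\<lambda>i. cs ! f i) [0..<k] \<in> D}"
proof -
  obtain p e where p: "params_in S C {..<k} p e" "D = defset S k p e"
    using assms(1) unfolding definable_def by blast
  define e' where "e' = e \<circ> inv f"
  have e'_f: "e' (f i) = e i" for i using assms(2) by (simp add: e'_def)
  have "params_in S C {..<k'} (rename f p) e'"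
    using p(1) assms(3) e'_f unfolding params_in_def FV_rename[OF assms(2)] by force
  moreover have "(tuple_env k' cs e' \<circ> f) i = tuple_env k (map (\<lambda>i. cs ! f i) [0..<k]) e i" for cs i
    using assms(3)[of i] assms(4)[of i] e'_f by (cases "i < k") (simp_all add: tuple_env_def)
  then have "{cs \<in> tuples S k'. map (\<lambda>i. cs ! f i) [0..<k] \<in> D} = defset S k' (rename f p) e'"
    using assms(3) by (auto simp: p(2) defset_tuple_env sat_rename[OF assms(2)] tuples_def comp_def)
  ultimately show ?thesis unfolding definable_def by blast
qed

lemma mem_lprod_iff:
  assumes "D \<subseteq> tuples S n"
  shows "cs \<in> lprod D E \<longleftrightarrow> take n cs \<in> D \<and> drop n cs \<in> E"
proof
  assume "cs \<in> lprod D E"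
  then obtain as bs where "cs = as @ bs" "as \<in> D" "bs \<in> E" unfolding lprod_def by blast
  moreover have "length as = n" using assms \<open>as \<in> D\<close> by (auto simp: tuples_def)
  ultimately show "take n cs \<in> D \<and> drop n cs \<in> E" by simp
next
  assume "take n cs \<in> D \<and> drop n cs \<in> E"
  then show "cs \<in> lprod D E" unfolding lprod_def
    by (intro CollectI exI[of _ "take n cs"] exI[of _ "drop n cs"]) simp
qed

lemma tuples_add: "tuples S (n + m) = lprod (tuples S n) (tuples S m)"
proof (intro set_eqI iffI)
  fix cs assume "cs \<in> tuples S (n + m)"
  then show "cs \<in> lprod (tuples S n) (tuples S m)" unfolding lprod_def tuples_def
    by (intro CollectI exI[of _ "take n cs"] exI[of _ "drop n cs"]) (auto dest: in_set_takeD in_set_dropD)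
qed (auto simp: lprod_def tuples_def)

lemma mem_tuples_add_iff: "cs \<in> tuples S (n + m) \<longleftrightarrow> take n cs \<in> tuples S n \<and> drop n cs \<in> tuples S m"
  by (simp add: tuples_add mem_lprod_iff[OF subset_refl])

lemma definable_lprod_left:
  assumes "definable S C n D"
  shows "definable S C (n + m) (lprod D (tuples S m))"
proof -
  let ?f = "\<lambda>i. if i < n then i else i + m"
  have "map (\<lambda>i. cs ! ?f i) [0..<n] = take n cs" if "cs \<in> tuples S (n + m)" for cs
    using that by (intro nth_equalityI) (auto simp: tuples_def)
  moreover have "cs \<in> lprod D (tuples S m) \<longleftrightarrow> cs \<in> tuples S (n + m) \<and> take n cs \<in> D" for cs
    using definable_subset_tuples[OF assms] by (auto simp: mem_lprod_iff mem_tuples_add_iff)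
  ultimately have "lprod D (tuples S m) = {cs \<in> tuples S (n + m). map (\<lambda>i. cs ! ?f i) [0..<n] \<in> D}"
    by auto
  moreover have "inj ?f" by (auto simp: inj_def)
  ultimately show ?thesis by (auto intro: definable_coordinate_preimage[OF assms])
qed

lemma definable_lprod_right:
  assumes "definable S C m E"
  shows "definable S C (n + m) (lprod (tuples S n) E)"
proof -
  have "map (\<lambda>i. cs ! (i + n)) [0..<m] = drop n cs" if "cs \<in> tuples S (n + m)" for cs
    using that by (intro nth_equalityI) (auto simp: tuples_def add.commute)
  moreover have "cs \<in> lprod (tuples S n) E \<longleftrightarrow> cs \<in> tuples S (n + m) \<and> drop n cs \<in> E" for cs
    using definable_subset_tuples[OF assms] by (auto simp: mem_lprod_iff[OF subset_refl] mem_tuples_add_iff)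
  ultimately have "lprod (tuples S n) E = {cs \<in> tuples S (n + m). map (\<lambda>i. cs ! (i + n)) [0..<m] \<in> E}"
    by auto
  moreover have "inj (\<lambda>i. i + n)" by (auto simp: inj_def)
  ultimately show ?thesis by (auto intro: definable_coordinate_preimage[OF assms])
qed

definition fibre :: "('a, 'f, 'r) struct \<Rightarrow> nat \<Rightarrow> 'a list set \<Rightarrow> 'a list \<Rightarrow> 'a list set" where
  "fibre S n X b = {as \<in> tuples S n. as @ b \<in> X}"

lemma definable_fibre:
  assumes "definable S C (n + m) X" "b \<in> tuples S m" "C \<subseteq> dom S"
  shows "definable S (dom S) n (fibre S n X b)"
proof -
  obtain p e where p: "params_in S C {..<n + m} p e" "X = defset S (n + m) p e"
    using assms(1) unfolding definable_def by blast
  define e' where "e' = (\<lambda>j. if n \<le> j \<and> j < n + m then b ! (j - n) else e j)"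
  have b: "length b = m" "set b \<subseteq> dom S" using assms(2) by (auto simp: tuples_def)
  have "params_in S (dom S) {..<n} p e'"
    using p(1) assms(3) b unfolding params_in_def e'_def by (auto simp: subset_eq)
  moreover have "tuple_env n as e' = tuple_env (n + m) (as @ b) e" if "length as = n" for as
    using that b by (auto simp: fun_eq_iff tuple_env_def e'_def nth_append)
  then have "fibre S n X b = defset S n p e'"
    using b unfolding fibre_def p(2) defset_tuple_env by (auto simp: tuples_def)
  ultimately show ?thesis unfolding definable_def by blast
qed

lemma fibre_tuples: "b \<in> tuples S m \<Longrightarrow> fibre S n (tuples S (n + m)) b = tuples S n"
  by (auto simp: fibre_def tuples_def)

lemma fibre_Un: "fibre S n (X \<union> Y) b = fibre S n X b \<union> fibre S n Y b"
  by (auto simp: fibre_def)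

lemma fibre_disjoint: "X \<inter> Y = {} \<Longrightarrow> fibre S n X b \<inter> fibre S n Y b = {}"
  by (auto simp: fibre_def)

lemma take_drop_tuple_append: "as \<in> tuples S n \<Longrightarrow> take n (as @ bs) = as \<and> drop n (as @ bs) = bs"
  by (simp add: tuples_def)

lemma fibre_lprod_left: "D \<subseteq> tuples S n \<Longrightarrow> b \<in> tuples S m \<Longrightarrow> fibre S n (lprod D (tuples S m)) b = D"
  using take_drop_tuple_append[of _ S n b] unfolding fibre_def mem_lprod_iff by auto

lemma fibre_lprod_right:
  "fibre S n (lprod (tuples S n) E) b = (if b \<in> E then tuples S n else {})"
  using take_drop_tuple_append[of _ S n b] unfolding fibre_def mem_lprod_iff[OF subset_refl] by auto

lemma keisler_add:
  "keisler S C k \<rho> \<Longrightarrow> definable S C k D \<Longrightarrow> definable S C k E \<Longrightarrow> D \<inter> E = {} \<Longrightarrow> \<rho> (D \<union> E) = \<rho> D + \<rho> E"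
  unfolding keisler_def by blast

lemma keisler_empty: "keisler S C k \<rho> \<Longrightarrow> \<rho> {} = 0"
  using keisler_add[OF _ definable_empty definable_empty, of S C k \<rho>] by simp

lemma keisler_nonneg: "keisler S C k \<rho> \<Longrightarrow> 0 \<le> \<rho> D"
  unfolding keisler_def by (cases "definable S C k D") auto

lemma keisler_le_1:
  assumes "keisler S C k \<rho>"
  shows "\<rho> D \<le> 1"
proof (cases "definable S C k D")
  case True
  have "D \<union> (tuples S k - D) = tuples S k" using definable_subset_tuples[OF True] by blast
  then have "\<rho> D + \<rho> (tuples S k - D) = 1"
    using assms keisler_add[OF assms True definable_compl[OF True]] unfolding keisler_def by auto
  then show ?thesis using keisler_nonneg[OF assms, of "tuples S k - D"] by linarith
qed (use assms in \<open>simp add: keisler_def\<close>)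

lemma keisler_proj_y:
  assumes "keisler S C (n + m) \<omega>"
  shows "keisler S C m (proj_y S C n m \<omega>)"
  unfolding keisler_def
proof (intro conjI allI impI)
  show "proj_y S C n m \<omega> (tuples S m) = 1"
    using assms definable_tuples[of S C m] by (simp add: proj_y_def tuples_add[symmetric] keisler_def)
  fix D E assume DE: "definable S C m D \<and> definable S C m E \<and> D \<inter> E = {}"
  have "lprod (tuples S n) (D \<union> E) = lprod (tuples S n) D \<union> lprod (tuples S n) E"
    unfolding lprod_def by blast
  moreover have "lprod (tuples S n) D \<inter> lprod (tuples S n) E = {}"
    using DE by (auto simp: mem_lprod_iff[OF subset_refl])
  ultimately show "proj_y S C n m \<omega> (D \<union> E) = proj_y S C n m \<omega> D + proj_y S C n m \<omega> E"
    using DE keisler_add[OF assms definable_lprod_right definable_lprod_right] definable_Un[of S C m D E]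
    by (simp add: proj_y_def)
qed (use keisler_nonneg[OF assms] in \<open>auto simp: proj_y_def\<close>)

lemma restr_proj_y:
  assumes "C \<subseteq> C'"
  shows "restr S C m (proj_y S C' n m \<omega>) = proj_y S C n m (restr S C (n + m) \<omega>)"
proof
  fix E
  show "restr S C m (proj_y S C' n m \<omega>) E = proj_y S C n m (restr S C (n + m) \<omega>) E"
    using definable_mono[OF assms, of S m E] definable_lprod_right[of S C m E n]
    by (simp add: restr_def proj_y_def)
qed

lemma (in algebra) additive_eq_point_masses:
  fixes \<rho> :: "'a set \<Rightarrow> real"
  assumes "finite Ds" "Ds \<subseteq> M" "R \<in> M"
    and "\<And>X. X \<in> M \<Longrightarrow> 0 \<le> \<rho> X"
    and "\<And>X Y. X \<in> M \<Longrightarrow> Y \<in> M \<Longrightarrow> X \<inter> Y = {} \<Longrightarrow> \<rho> (X \<union> Y) = \<rho> X + \<rho> Y"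
    and "\<And>X. X \<in> M \<Longrightarrow> \<rho> X = \<rho> (X \<inter> R)"
  shows "\<exists>Q w. finite Q \<and> Q \<subseteq> R \<and> (\<forall>b\<in>Q. 0 \<le> w b) \<and> (\<forall>E\<in>insert \<Omega> Ds. \<rho> E = (\<Sum>b\<in>Q \<inter> E. w b))"
  using assms
proof (induction Ds arbitrary: \<rho> R rule: finite_induct)
  case empty
  show ?case
  proof (cases "R = {}")
    case True
    have "\<rho> ({} \<union> {}) = \<rho> {} + \<rho> {}" using empty.prems(4) by blast
    then show ?thesis using True empty.prems(5)[OF top] by (intro exI[of _ "{}"]) auto
  next
    case False
    then obtain b where b: "b \<in> R" by blast
    moreover have "b \<in> \<Omega>" using b empty.prems(2) sets_into_space by blast
    ultimately show ?thesis
      by (intro exI[of _ "{b}"] exI[of _ "\<lambda>_. \<rho> \<Omega>"]) (auto intro: empty.prems(3))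
  qed
next
  case (insert E0 Ds)
  have E0: "E0 \<in> M" and Ds: "Ds \<subseteq> M" using insert.prems(1) by auto
  \<comment> \<open>Represent the restrictions of \<open>\<rho>\<close> to \<open>E0\<close> and to its complement separately; the
    support hypothesis \<open>R\<close> keeps their point masses inside \<open>E0\<close> and outside it, respectively.\<close>
  have split: "\<exists>Q w. finite Q \<and> Q \<subseteq> R \<inter> Y \<and> (\<forall>b\<in>Q. 0 \<le> w b) \<and>
      (\<forall>E\<in>insert \<Omega> Ds. \<rho> (E \<inter> Y) = (\<Sum>b\<in>Q \<inter> E. w b))" if Y: "Y \<in> M" for Y
  proof (rule insert.IH[OF Ds])
    show "R \<inter> Y \<in> M" using insert.prems(2) Y by blast
    show "0 \<le> \<rho> (X \<inter> Y)" if "X \<in> M" for X using insert.prems(3) that Y by blast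
    show "\<rho> ((X \<union> Z) \<inter> Y) = \<rho> (X \<inter> Y) + \<rho> (Z \<inter> Y)" if "X \<in> M" "Z \<in> M" "X \<inter> Z = {}" for X Z
      using insert.prems(4)[of "X \<inter> Y" "Z \<inter> Y"] that Y by (auto simp: Int_Un_distrib2)
    show "\<rho> (X \<inter> Y) = \<rho> (X \<inter> (R \<inter> Y) \<inter> Y)" if "X \<in> M" for X
      using insert.prems(5)[of "X \<inter> Y"] that Y by (auto simp: Int_ac)
  qed
  obtain Q1 w1 where Q1: "finite Q1" "Q1 \<subseteq> R \<inter> E0" "\<forall>b\<in>Q1. 0 \<le> w1 b"
    "\<forall>E\<in>insert \<Omega> Ds. \<rho> (E \<inter> E0) = (\<Sum>b\<in>Q1 \<inter> E. w1 b)"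
    using split[OF E0] by blast
  obtain Q2 w2 where Q2: "finite Q2" "Q2 \<subseteq> R \<inter> (\<Omega> - E0)" "\<forall>b\<in>Q2. 0 \<le> w2 b"
    "\<forall>E\<in>insert \<Omega> Ds. \<rho> (E \<inter> (\<Omega> - E0)) = (\<Sum>b\<in>Q2 \<inter> E. w2 b)"
    using split[OF compl_sets[OF E0]] by blast
  define w where "w b = (if b \<in> E0 then w1 b else w2 b)" for b
  have \<rho>_empty: "\<rho> {} = 0"
    using insert.prems(4)[of "{}" "{}"] by simp
  have parts: "\<rho> (E \<inter> E0) = (\<Sum>b\<in>Q1 \<inter> E. w b) \<and> \<rho> (E \<inter> (\<Omega> - E0)) = (\<Sum>b\<in>Q2 \<inter> E. w b)"
    if E: "E \<in> insert \<Omega> (insert E0 Ds)" for E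
  proof -
    have "(\<Sum>b\<in>Q1 \<inter> E. w b) = (\<Sum>b\<in>Q1 \<inter> E. w1 b)" "(\<Sum>b\<in>Q2 \<inter> E. w b) = (\<Sum>b\<in>Q2 \<inter> E. w2 b)"
      using Q1(2) Q2(2) by (auto simp: w_def intro!: sum.cong)
    moreover have "Q1 \<inter> E0 = Q1 \<inter> \<Omega>" "Q2 \<inter> E0 = {}" "\<Omega> \<inter> E0 = E0" "E0 \<inter> (\<Omega> - E0) = {}"
      using Q1(2) Q2(2) sets_into_space E0 by auto
    ultimately show ?thesis using E Q1(4) Q2(4) \<rho>_empty by (cases "E = E0") auto
  qed
  show ?case
  proof (intro exI[of _ "Q1 \<union> Q2"] exI[of _ w] conjI ballI)
    show "finite (Q1 \<union> Q2)" "Q1 \<union> Q2 \<subseteq> R" using Q1(1,2) Q2(1,2) by auto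
    show "0 \<le> w b" if "b \<in> Q1 \<union> Q2" for b using that Q1(2,3) Q2(2,3) by (auto simp: w_def)
    fix E assume E: "E \<in> insert \<Omega> (insert E0 Ds)"
    then have "E \<in> M" using insert.prems(1) by auto
    then have "E \<inter> E0 \<union> E \<inter> (\<Omega> - E0) = E" using sets_into_space by blast
    then have "\<rho> E = \<rho> (E \<inter> E0) + \<rho> (E \<inter> (\<Omega> - E0))"
      using insert.prems(4)[of "E \<inter> E0" "E \<inter> (\<Omega> - E0)"] \<open>E \<in> M\<close> E0 by auto
    also have "\<dots> = (\<Sum>b\<in>(Q1 \<union> Q2) \<inter> E. w b)"
      using parts[OF E] Q1(1,2) Q2(1,2) by (subst Int_Un_distrib2, subst sum.union_disjoint) auto
    finally show "\<rho> E = (\<Sum>b\<in>(Q1 \<union> Q2) \<inter> E. w b)" .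
  qed
qed

definition fibre_mixture ::
    "('a, 'f, 'r) struct \<Rightarrow> 'a set \<Rightarrow> nat \<Rightarrow> nat \<Rightarrow> 'a list set \<Rightarrow> ('a list \<Rightarrow> real) \<Rightarrow>
      ('a list set \<Rightarrow> real) \<Rightarrow> 'a list set \<Rightarrow> real" where
  "fibre_mixture S A n m Q w \<mu> C =
     (if definable S A (n + m) C then \<Sum>b\<in>Q. w b * \<mu> (fibre S n C b) else 0)"

context
  fixes S :: "('a, 'f, 'r) struct" and A :: "'a set" and n m :: nat
    and Q :: "'a list set" and w :: "'a list \<Rightarrow> real" and \<mu> :: "'a list set \<Rightarrow> real"
  assumes A: "A \<subseteq> dom S" and \<mu>: "keisler S (dom S) n \<mu>"
    and Q: "finite Q" "Q \<subseteq> tuples S m"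
    and w: "\<And>b. b \<in> Q \<Longrightarrow> 0 \<le> w b" "(\<Sum>b\<in>Q. w b) = 1"
begin

lemma keisler_fibre_mixture: "keisler S A (n + m) (fibre_mixture S A n m Q w \<mu>)"
  unfolding keisler_def
proof (intro conjI allI impI)
  show "0 \<le> fibre_mixture S A n m Q w \<mu> D" for D
    using w(1) keisler_nonneg[OF \<mu>] by (auto simp: fibre_mixture_def intro!: sum_nonneg)
  have "fibre_mixture S A n m Q w \<mu> (tuples S (n + m)) = (\<Sum>b\<in>Q. w b * \<mu> (tuples S n))"
    using definable_tuples[of S A "n + m"] Q(2) by (auto simp: fibre_mixture_def fibre_tuples intro!: sum.cong)
  then show "fibre_mixture S A n m Q w \<mu> (tuples S (n + m)) = 1"
    using \<mu> w(2) by (simp add: keisler_def flip: sum_distrib_right)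
  fix D E assume DE: "definable S A (n + m) D \<and> definable S A (n + m) E \<and> D \<inter> E = {}"
  have "\<mu> (fibre S n (D \<union> E) b) = \<mu> (fibre S n D b) + \<mu> (fibre S n E b)" if "b \<in> Q" for b
  proof -
    have b: "b \<in> tuples S m" using that Q(2) by blast
    have "definable S (dom S) n (fibre S n D b)" "definable S (dom S) n (fibre S n E b)"
      using DE definable_fibre[OF _ b A] by blast+
    then show ?thesis using keisler_add[OF \<mu>] DE by (simp add: fibre_Un fibre_disjoint)
  qed
  then show "fibre_mixture S A n m Q w \<mu> (D \<union> E) = fibre_mixture S A n m Q w \<mu> D + fibre_mixture S A n m Q w \<mu> E"
    using DE definable_Un[of S A "n + m" D E]
    by (simp add: fibre_mixture_def distrib_left sum.distrib cong: sum.cong)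
qed (simp add: fibre_mixture_def)

lemma proj_x_fibre_mixture: "proj_x S A n m (fibre_mixture S A n m Q w \<mu>) = restr S A n \<mu>"
proof
  fix D
  show "proj_x S A n m (fibre_mixture S A n m Q w \<mu>) D = restr S A n \<mu> D"
  proof (cases "definable S A n D")
    case True
    have "fibre_mixture S A n m Q w \<mu> (lprod D (tuples S m)) = (\<Sum>b\<in>Q. w b * \<mu> D)"
      using definable_lprod_left[OF True] definable_subset_tuples[OF True] Q(2)
      by (auto simp: fibre_mixture_def fibre_lprod_left intro!: sum.cong)
    then show ?thesis using True w(2) by (simp add: proj_x_def restr_def flip: sum_distrib_right)
  qed (simp add: proj_x_def restr_def)
qed

lemma fibre_mixture_lprod_right:
  assumes "definable S A m E"
  shows "fibre_mixture S A n m Q w \<mu> (lprod (tuples S n) E) = (\<Sum>b\<in>Q \<inter> E. w b)"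
proof -
  have "fibre_mixture S A n m Q w \<mu> (lprod (tuples S n) E) = (\<Sum>b\<in>Q. if b \<in> E then w b else 0)"
    using definable_lprod_right[OF assms] \<mu> keisler_empty[OF \<mu>]
    by (auto simp: fibre_mixture_def fibre_lprod_right keisler_def intro!: sum.cong)
  also have "\<dots> = (\<Sum>b\<in>Q \<inter> E. w b)" using Q(1) by (simp add: sum.inter_restrict)
  finally show ?thesis .
qed

end

lemma finite_coupling:
  assumes A: "A \<subseteq> dom S" and \<nu>: "keisler S (dom S) m \<nu>" and \<mu>: "keisler S (dom S) n \<mu>"
    and Es: "finite Es" "Es \<subseteq> {E. definable S A m E}"
  shows "\<exists>lam. keisler S A (n + m) lam \<and> proj_x S A n m lam = restr S A n \<mu> \<and>
    (\<forall>E\<in>Es. lam (lprod (tuples S n) E) = \<nu> E)"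
proof -
  interpret algebra "tuples S m" "{E. definable S A m E}" by (rule algebra_definable)
  have "\<exists>Q w. finite Q \<and> Q \<subseteq> tuples S m \<and> (\<forall>b\<in>Q. 0 \<le> w b) \<and>
      (\<forall>E\<in>insert (tuples S m) Es. \<nu> E = (\<Sum>b\<in>Q \<inter> E. w b))"
  proof (rule additive_eq_point_masses[OF Es top])
    show "0 \<le> \<nu> X" for X using keisler_nonneg[OF \<nu>] .
    show "\<nu> (X \<union> Y) = \<nu> X + \<nu> Y" if "X \<in> {E. definable S A m E}" "Y \<in> {E. definable S A m E}" "X \<inter> Y = {}" for X Y
      using that by (auto intro: keisler_add[OF \<nu>] definable_mono[OF A])
  qed simp
  then obtain Q w where Q: "finite Q" "Q \<subseteq> tuples S m" "\<forall>b\<in>Q. 0 \<le> w b"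
    and \<nu>_Q: "\<forall>E\<in>insert (tuples S m) Es. \<nu> E = (\<Sum>b\<in>Q \<inter> E. w b)" by blast
  have w: "\<And>b. b \<in> Q \<Longrightarrow> 0 \<le> w b" "(\<Sum>b\<in>Q. w b) = 1"
    using Q(3) \<nu>_Q \<nu> Int_absorb2[OF Q(2)] unfolding keisler_def by auto
  note mixture = keisler_fibre_mixture[OF A \<mu> Q(1,2) w] proj_x_fibre_mixture[OF A \<mu> Q(1,2) w]
    fibre_mixture_lprod_right[OF A \<mu> Q(1,2) w]
  show ?thesis
    using mixture \<nu>_Q Es by (intro exI[of _ "fibre_mixture S A n m Q w \<mu>"]) (simp add: subset_eq)
qed

lemma closed_keisler: "closed {lam. keisler S C k lam}"
  unfolding keisler_def
  by (intro closed_Collect_conj closed_Collect_all closed_Collect_imp open_Collect_const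
      closed_Collect_eq closed_Collect_le continuous_intros continuous_on_product_coordinates)

lemma closed_Collect_coordinates_eq: "closed {lam :: 'a list set \<Rightarrow> real. \<forall>D. P D \<longrightarrow> lam (F D) = \<mu> D}"
  by (intro closed_Collect_all closed_Collect_imp open_Collect_const
      closed_Collect_eq continuous_intros continuous_on_product_coordinates)

lemma compact_unit_cube: "compact {f :: 'b \<Rightarrow> real. \<forall>i. f i \<in> {0..1}}"
proof -
  have "compactin (product_topology (\<lambda>i. euclidean) UNIV) (PiE UNIV (\<lambda>i::'b. {0..1::real}))"
    by (simp add: compactin_PiE)
  moreover have "PiE UNIV (\<lambda>i::'b. {0..1::real}) = {f. \<forall>i. f i \<in> {0..1}}" by auto
  ultimately show ?thesis by (simp add: euclidean_product_topology)
qed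

lemma coupling_exists:
  assumes A: "A \<subseteq> dom S" and \<nu>: "keisler S (dom S) m \<nu>" and \<mu>: "keisler S (dom S) n \<mu>"
  shows "\<exists>lam. keisler S A (n + m) lam \<and> proj_x S A n m lam = restr S A n \<mu> \<and>
    proj_y S A n m lam = restr S A m \<nu>"
proof -
  define K where "K = {lam. keisler S A (n + m) lam \<and> proj_x S A n m lam = restr S A n \<mu>}"
  define K\<^sub>y where "K\<^sub>y E = {lam :: 'a list set \<Rightarrow> real. lam (lprod (tuples S n) E) = \<nu> E}" for E
  have "K = {lam. keisler S A (n + m) lam} \<inter>
      {lam. \<forall>D. definable S A n D \<longrightarrow> lam (lprod D (tuples S m)) = \<mu> D}"
    unfolding K_def by (auto simp: fun_eq_iff proj_x_def restr_def)
  then have "closed K" by (simp add: closed_Int closed_keisler closed_Collect_coordinates_eq)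
  moreover have "K \<subseteq> {lam. \<forall>C. lam C \<in> {0..1}}"
    unfolding K_def by (auto intro: keisler_nonneg keisler_le_1)
  ultimately have "compact K" using compact_Int_closed[OF compact_unit_cube] by (metis inf.absorb_iff2)
  then have "K \<inter> (\<Inter>E\<in>{E. definable S A m E}. K\<^sub>y E) \<noteq> {}"
  proof (rule compact_imp_fip_image)
    show "closed (K\<^sub>y E)" for E unfolding K\<^sub>y_def
      by (intro closed_Collect_eq continuous_intros continuous_on_product_coordinates)
    fix Es assume "finite Es" "Es \<subseteq> {E. definable S A m E}"
    from finite_coupling[OF A \<nu> \<mu> this] show "K \<inter> (\<Inter>E\<in>Es. K\<^sub>y E) \<noteq> {}"
      unfolding K_def K\<^sub>y_def by blast
  qed
  then obtain lam where "lam \<in> K" and "\<And>E. definable S A m E \<Longrightarrow> lam \<in> K\<^sub>y E" by blast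
  moreover from this(2) have "proj_y S A n m lam = restr S A m \<nu>"
    by (auto simp: fun_eq_iff proj_y_def restr_def K\<^sub>y_def)
  ultimately show ?thesis unfolding K_def by blast
qed

theorem proposition4p6:
  fixes S :: "('a, 'f, 'r) struct" and K :: "'k set" and A :: "'a set"
    and n m :: nat and \<mu> \<nu> :: "'a list set \<Rightarrow> real"
  assumes "monster S K"
    and "A \<subseteq> dom S" and "A \<prec> K"
    and "keisler S (dom S) m \<nu>" and "smooth S A m \<nu>"
    and "keisler S (dom S) n \<mu>"
  shows "geqE S A n m \<mu> \<nu>"
proof -
  obtain lam where lam: "keisler S A (n + m) lam" "proj_x S A n m lam = restr S A n \<mu>"
    "proj_y S A n m lam = restr S A m \<nu>"
    using coupling_exists[OF assms(2,4,6)] by blast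
  have "proj_y S (dom S) n m \<omega> = \<nu>"
    if "keisler S (dom S) (n + m) \<omega>" and "restr S A (n + m) \<omega> = lam" for \<omega>
  proof -
    have "restr S A m (proj_y S (dom S) n m \<omega>) = restr S A m \<nu>"
      using restr_proj_y[OF assms(2), of S m n \<omega>] that(2) lam(3) by simp
    then show ?thesis using assms(5) keisler_proj_y[OF that(1)] unfolding smooth_def by blast
  qed
  then show ?thesis unfolding geqE_def using lam(1,2) by blast
qed

end
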